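(* Let $G=(V,E,w)$ be a finite undirected graph with positive vertex weights and let $IC, C\subseteq V$. (a) Suppose $IC\subseteq VC_w$ for some minimum weight vertex cover $VC_w$ of $G$. Then $w(p)\le \alpha_w(G[N(p)\setminus IC])$ for every $p\in IC$. Moreover, if $v\in IC$ and $u\in N^2(v)$ satisfy $w(v)>\alpha_w(G[N(v)\setminus(IC\cup N(u))])$, then $IC\cup\{u\}\subseteq VC_w$. (b) Suppose $C$ is contained in every minimum weight vertex cover of $G$. Then $w(p)<\alpha_w(G[N(p)\setminus C])$ for every $p\in C$. Moreover, if $v\in C$ and $u\in N^2(v)$ satisfy $w(v)\ge\alpha_w(G[N(v)\setminus(C\cup N(u))])$, then $C\cup\{u\}$ is contained in every minimum weight vertex cover of $G$.
   Context: $G=(V,E,w)$ is a finite simple undirected graph with $w:V\to\mathbb{R}^{+}$; $w(S)=\sum_{v\in S}w(v)$. A vertex cover is a set $VC\subseteq V$ meeting every edge; a minimum weight vertex cover (MWVC) is one of minimum total weight. $N(v)$ is the neighbour set of $v$; $N^2(v)$ is the set of vertices at graph distance exactly $2$ from $v$. For $S\subseteq V$, $G[S]$ is the induced subgraph and $\alpha_w(G[S])$ is the maximum weight of an independent set in $G[S]$, with $\alpha_w(G[\emptyset])=0$. *)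

theory Defs
  imports Complex_Main
begin

definition simple_graph :: "'a set \<Rightarrow> 'a set set \<Rightarrow> bool" where
  "simple_graph V E \<longleftrightarrow> finite V \<and>
     (\<forall>e\<in>E. \<exists>u v. e = {u, v} \<and> u \<noteq> v \<and> u \<in> V \<and> v \<in> V)"

definition wsum :: "('a \<Rightarrow> real) \<Rightarrow> 'a set \<Rightarrow> real" where
  "wsum w S = (\<Sum>v\<in>S. w v)"

definition vertex_cover :: "'a set \<Rightarrow> 'a set set \<Rightarrow> 'a set \<Rightarrow> bool" where
  "vertex_cover V E C \<longleftrightarrow> C \<subseteq> V \<and> (\<forall>e\<in>E. e \<inter> C \<noteq> {})"

definition min_weight_vc :: "'a set \<Rightarrow> 'a set set \<Rightarrow> ('a \<Rightarrow> real) \<Rightarrow> 'a set \<Rightarrow> bool" where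
  "min_weight_vc V E w C \<longleftrightarrow> vertex_cover V E C \<and>
     (\<forall>C'. vertex_cover V E C' \<longrightarrow> wsum w C \<le> wsum w C')"

definition nbrs :: "'a set set \<Rightarrow> 'a \<Rightarrow> 'a set" where
  "nbrs E v = {u. {u, v} \<in> E}"

definition nbrs2 :: "'a set set \<Rightarrow> 'a \<Rightarrow> 'a set" where
  "nbrs2 E v = {u. u \<noteq> v \<and> u \<notin> nbrs E v \<and> (\<exists>x\<in>nbrs E v. u \<in> nbrs E x)}"

definition independent :: "'a set set \<Rightarrow> 'a set \<Rightarrow> bool" where
  "independent E I \<longleftrightarrow> (\<forall>u\<in>I. \<forall>v\<in>I. {u, v} \<notin> E)"

text \<open>Maximum weight of an independent set of the induced subgraph G[S]
(for finite S; equals 0 for S empty).\<close>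
definition alpha_w :: "'a set set \<Rightarrow> ('a \<Rightarrow> real) \<Rightarrow> 'a set \<Rightarrow> real" where
  "alpha_w E w S = Max {wsum w I | I. I \<subseteq> S \<and> independent E I}"

end

theory Submission
  imports Defs
begin

text \<open>If \<open>M\<close> is a vertex cover containing \<open>p\<close>, removing \<open>p\<close> and adding its neighbours outside
  \<open>M\<close> again gives a vertex cover, so for a minimum cover \<open>w p \<le> w(N(p) - M)\<close>, with strict
  inequality when \<open>p\<close> lies in every minimum cover (the new cover avoids \<open>p\<close>). The set \<open>N(p) - M\<close>
  is independent and contained in \<open>N(p) - S\<close> for every \<open>S \<subseteq> M\<close>, whence the bounds by \<open>\<alpha>\<^sub>w\<close>.
  For the claims about \<open>u\<close>: a cover missing \<open>u\<close> contains \<open>N(u)\<close>, so one may take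
  \<open>S = IC \<union> N(u)\<close> (resp. \<open>C \<union> N(u)\<close>) and obtain a contradiction.\<close>

lemma nbrs_subset_vertices: "simple_graph V E \<Longrightarrow> nbrs E p \<subseteq> V"
  unfolding simple_graph_def nbrs_def by (smt (verit) doubleton_eq_iff mem_Collect_eq subsetI)

lemma not_in_nbrs_self: "simple_graph V E \<Longrightarrow> p \<notin> nbrs E p"
  unfolding simple_graph_def nbrs_def by (metis doubleton_eq_iff mem_Collect_eq)

lemma nbrs_subset_cover: "vertex_cover V E M \<Longrightarrow> u \<notin> M \<Longrightarrow> nbrs E u \<subseteq> M"
  unfolding vertex_cover_def nbrs_def by auto

lemma independent_diff_cover: "vertex_cover V E M \<Longrightarrow> independent E (S - M)"
  unfolding vertex_cover_def independent_def by auto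

lemma wsum_le_alpha_w:
  assumes "finite S" "I \<subseteq> S" "independent E I"
  shows "wsum w I \<le> alpha_w E w S"
  unfolding alpha_w_def
proof (rule Max_ge)
  have "{wsum w I | I. I \<subseteq> S \<and> independent E I} \<subseteq> wsum w ` Pow S" by blast
  then show "finite {wsum w I | I. I \<subseteq> S \<and> independent E I}"
    using assms(1) by (meson finite_Pow_iff finite_imageI finite_subset)
qed (use assms(2,3) in blast)

lemma vertex_cover_swap:
  assumes "simple_graph V E" "vertex_cover V E M"
  shows "vertex_cover V E (M - {p} \<union> (nbrs E p - M))"
  unfolding vertex_cover_def
proof (intro conjI ballI)
  show "M - {p} \<union> (nbrs E p - M) \<subseteq> V"
    using assms nbrs_subset_vertices[OF assms(1)] unfolding vertex_cover_def by blast
next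
  fix e assume "e \<in> E"
  then obtain a b where ab: "e = {a, b}" "a \<noteq> b"
    using assms(1) unfolding simple_graph_def by blast
  have "a \<in> M \<or> b \<in> M"
    using assms(2) \<open>e \<in> E\<close> unfolding vertex_cover_def ab(1) by auto
  moreover have "a \<in> nbrs E b" "b \<in> nbrs E a"
    using \<open>e \<in> E\<close> ab(1) unfolding nbrs_def by (simp_all add: insert_commute)
  ultimately show "e \<inter> (M - {p} \<union> (nbrs E p - M)) \<noteq> {}"
    using ab by auto
qed

lemma wsum_swap:
  assumes "simple_graph V E" "vertex_cover V E M" "p \<in> M"
  shows "wsum w (M - {p} \<union> (nbrs E p - M)) = wsum w M - w p + wsum w (nbrs E p - M)"
proof -
  have "finite V" using assms(1) unfolding simple_graph_def by blast
  then have "finite M" "finite (nbrs E p - M)"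
    using assms(1,2) nbrs_subset_vertices[OF assms(1)] unfolding vertex_cover_def
    by (auto intro: finite_subset)
  then show ?thesis
    unfolding wsum_def using assms(3) by (simp add: sum.union_disjoint sum.remove Diff_Int_distrib2)
qed

lemma min_weight_vc_weight_le:
  assumes "simple_graph V E" "min_weight_vc V E w M" "p \<in> M"
  shows "w p \<le> wsum w (nbrs E p - M)"
proof -
  have "vertex_cover V E M" using assms(2) unfolding min_weight_vc_def by blast
  then have "wsum w M \<le> wsum w (M - {p} \<union> (nbrs E p - M))"
    using assms(2) vertex_cover_swap[OF assms(1)] unfolding min_weight_vc_def by blast
  then show ?thesis using wsum_swap[OF assms(1) \<open>vertex_cover V E M\<close> assms(3)] by simp
qed

lemma min_weight_vc_weight_less:
  assumes "simple_graph V E" "min_weight_vc V E w M" "p \<in> M"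
    and forced: "\<forall>M'. min_weight_vc V E w M' \<longrightarrow> p \<in> M'"
  shows "w p < wsum w (nbrs E p - M)"
proof -
  let ?M' = "M - {p} \<union> (nbrs E p - M)"
  have vc: "vertex_cover V E M" using assms(2) unfolding min_weight_vc_def by blast
  have "p \<notin> ?M'" using not_in_nbrs_self[OF assms(1)] by blast
  with forced have "\<not> min_weight_vc V E w ?M'" by blast
  then obtain C' where "vertex_cover V E C'" "wsum w C' < wsum w ?M'"
    using vertex_cover_swap[OF assms(1) vc] unfolding min_weight_vc_def by force
  moreover have "wsum w M \<le> wsum w C'"
    using assms(2) \<open>vertex_cover V E C'\<close> unfolding min_weight_vc_def by blast
  ultimately show ?thesis using wsum_swap[OF assms(1) vc assms(3)] by simp
qed

lemma wsum_nbrs_diff_le_alpha_w: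
  assumes "simple_graph V E" "vertex_cover V E M" "S \<subseteq> M"
  shows "wsum w (nbrs E p - M) \<le> alpha_w E w (nbrs E p - S)"
proof (rule wsum_le_alpha_w)
  show "finite (nbrs E p - S)"
    using assms(1) nbrs_subset_vertices[OF assms(1)] unfolding simple_graph_def by (meson finite_Diff finite_subset)
qed (use assms(3) independent_diff_cover[OF assms(2)] in auto)

lemma min_weight_vc_le_alpha_w:
  assumes "simple_graph V E" "min_weight_vc V E w M" "S \<subseteq> M" "p \<in> S"
  shows "w p \<le> alpha_w E w (nbrs E p - S)"
  using min_weight_vc_weight_le[OF assms(1,2)] wsum_nbrs_diff_le_alpha_w[OF assms(1) _ assms(3)]
    assms(2-4) unfolding min_weight_vc_def by (meson order_trans subsetD)

lemma min_weight_vc_less_alpha_w: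
  assumes "simple_graph V E" "min_weight_vc V E w M" "S \<subseteq> M" "p \<in> S"
    and "\<forall>M'. min_weight_vc V E w M' \<longrightarrow> p \<in> M'"
  shows "w p < alpha_w E w (nbrs E p - S)"
  using min_weight_vc_weight_less[OF assms(1,2) _ assms(5)] wsum_nbrs_diff_le_alpha_w[OF assms(1) _ assms(3)]
    assms(2-4) unfolding min_weight_vc_def by (meson order_less_le_trans subsetD)

lemma min_weight_vc_exists:
  assumes "simple_graph V E"
  shows "\<exists>M. min_weight_vc V E w M"
proof -
  let ?S = "{C. vertex_cover V E C}"
  have "finite ?S"
    using assms unfolding simple_graph_def vertex_cover_def by (simp add: finite_subset[of _ "Pow V"] subset_eq)
  moreover have "V \<in> ?S" using assms unfolding vertex_cover_def simple_graph_def by blast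
  ultimately obtain M where "is_arg_min (wsum w) (\<lambda>C. C \<in> ?S) M"
    using ex_is_arg_min_if_finite by blast
  then show ?thesis unfolding is_arg_min_def min_weight_vc_def by (auto simp: not_less)
qed

theorem theorem2p3:
  fixes V :: "'a set" and E :: "'a set set" and w :: "'a \<Rightarrow> real"
    and IC C :: "'a set"
  assumes graph: "simple_graph V E"
    and wpos: "\<forall>v\<in>V. w v > 0"
    and IC_sub: "IC \<subseteq> V" and C_sub: "C \<subseteq> V"
  shows
    "(\<forall>VCw. min_weight_vc V E w VCw \<and> IC \<subseteq> VCw \<longrightarrow>
          (\<forall>p\<in>IC. w p \<le> alpha_w E w (nbrs E p - IC)) \<and>
          (\<forall>v\<in>IC. \<forall>u\<in>nbrs2 E v.
             w v > alpha_w E w (nbrs E v - (IC \<union> nbrs E u)) \<longrightarrow> IC \<union> {u} \<subseteq> VCw))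
     \<and>
     ((\<forall>VCw. min_weight_vc V E w VCw \<longrightarrow> C \<subseteq> VCw) \<longrightarrow>
        (\<forall>p\<in>C. w p < alpha_w E w (nbrs E p - C)) \<and>
        (\<forall>v\<in>C. \<forall>u\<in>nbrs2 E v.
           w v \<ge> alpha_w E w (nbrs E v - (C \<union> nbrs E u)) \<longrightarrow>
           (\<forall>VCw. min_weight_vc V E w VCw \<longrightarrow> C \<union> {u} \<subseteq> VCw)))"
proof (intro conjI allI impI ballI)
  fix VCw assume "min_weight_vc V E w VCw \<and> IC \<subseteq> VCw"
  then have VCw: "min_weight_vc V E w VCw" "IC \<subseteq> VCw" by simp_all
  show "w p \<le> alpha_w E w (nbrs E p - IC)" if "p \<in> IC" for p
    using min_weight_vc_le_alpha_w[OF graph VCw that] .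
  show "IC \<union> {u} \<subseteq> VCw"
    if "v \<in> IC" "alpha_w E w (nbrs E v - (IC \<union> nbrs E u)) < w v" for v u
  proof (rule ccontr)
    assume "\<not> IC \<union> {u} \<subseteq> VCw"
    with VCw have "IC \<union> nbrs E u \<subseteq> VCw"
      using nbrs_subset_cover[of V E VCw u] unfolding min_weight_vc_def by blast
    from min_weight_vc_le_alpha_w[OF graph VCw(1) this, of v] that show False by simp
  qed
next
  assume forced: "\<forall>VCw. min_weight_vc V E w VCw \<longrightarrow> C \<subseteq> VCw"
  obtain M where M: "min_weight_vc V E w M" using min_weight_vc_exists[OF graph] by blast
  show "w p < alpha_w E w (nbrs E p - C)" if "p \<in> C" for p
    using forced M that by (intro min_weight_vc_less_alpha_w[OF graph M]) blast+
  show "C \<union> {u} \<subseteq> VCw"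
    if "v \<in> C" "alpha_w E w (nbrs E v - (C \<union> nbrs E u)) \<le> w v" "min_weight_vc V E w VCw"
    for v u VCw
  proof (rule ccontr)
    assume "\<not> C \<union> {u} \<subseteq> VCw"
    with forced that(3) have "C \<union> nbrs E u \<subseteq> VCw"
      using nbrs_subset_cover[of V E VCw u] unfolding min_weight_vc_def by blast
    have "w v < alpha_w E w (nbrs E v - (C \<union> nbrs E u))"
      using forced that(1) by (intro min_weight_vc_less_alpha_w[OF graph that(3) \<open>C \<union> nbrs E u \<subseteq> VCw\<close>]) blast+
    with that(2) show False by simp
  qed
qed

end
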